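(* Let $G$ be a non-supergraceful graph with $p$ nodes and $q$ edges having a node $u$ of degree $p-1$. Suppose there is a semitotal labeling $\varphi$ of $G$ such that $\varphi(u) = \mathrm{opt}(G)$ and $\mathrm{opt}(G)-1 \in N(\varphi) \cup E(\varphi)$, where $\mathrm{opt}(G) = p+q+q_0$. Then there is a semitotal labeling $\mu$ of $G$ such that $1 \in N(\mu)$.
   Context: Graphs are finite, simple, connected. For a labeling $\varphi: V(G) \to \mathbb{Z}_{>0}$ let $N(\varphi) = \{\varphi(x) : x \in V(G)\}$ and $E(\varphi) = \{|\varphi(x)-\varphi(y)| : xy \in E(G)\}$. A total labeling of a $(p,q)$-graph $G$ is a map $\varphi$ such that the $p$ node labels and the $q$ edge labels are pairwise distinct and $N(\varphi) \cup E(\varphi) = \{1,\dots,p+q\}$; $G$ is supergraceful if it has one, non-supergraceful otherwise. If $G$ is non-supergraceful, let $q_0 > 0$ be the least integer such that there is a labeling $\varphi$ with all $p$ node labels and $q$ edge labels pairwise distinct and $N(\varphi) \cup E(\varphi) \subseteq \{1,2,\dots,p+q+q_0\}$; such a $\varphi$ is a semitotal labeling, and $\mathrm{opt}(G) := p+q+q_0$. *)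

theory Defs
  imports Main
begin

definition simple_graph :: "'a set \<Rightarrow> 'a set set \<Rightarrow> bool" where
  "simple_graph V E \<longleftrightarrow> finite V \<and> (\<forall>e\<in>E. \<exists>x y. x \<in> V \<and> y \<in> V \<and> x \<noteq> y \<and> e = {x, y})"

definition adj :: "'a set set \<Rightarrow> 'a \<Rightarrow> 'a \<Rightarrow> bool" where
  "adj E x y \<longleftrightarrow> {x, y} \<in> E \<and> x \<noteq> y"

definition connected_graph :: "'a set \<Rightarrow> 'a set set \<Rightarrow> bool" where
  "connected_graph V E \<longleftrightarrow> simple_graph V E \<and> V \<noteq> {} \<and>
     (\<forall>x\<in>V. \<forall>y\<in>V. (adj E)\<^sup>*\<^sup>* x y)"

definition degree :: "'a set \<Rightarrow> 'a set set \<Rightarrow> 'a \<Rightarrow> nat" where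
  "degree V E u = card {v \<in> V. {u, v} \<in> E \<and> u \<noteq> v}"

definition elab :: "('a \<Rightarrow> nat) \<Rightarrow> 'a set \<Rightarrow> nat" where
  "elab \<phi> e = Max (\<phi> ` e) - Min (\<phi> ` e)"

definition Nlab :: "'a set \<Rightarrow> ('a \<Rightarrow> nat) \<Rightarrow> nat set" where
  "Nlab V \<phi> = \<phi> ` V"

definition Elab :: "'a set set \<Rightarrow> ('a \<Rightarrow> nat) \<Rightarrow> nat set" where
  "Elab E \<phi> = elab \<phi> ` E"

definition distinct_labeling :: "'a set \<Rightarrow> 'a set set \<Rightarrow> ('a \<Rightarrow> nat) \<Rightarrow> bool" where
  "distinct_labeling V E \<phi> \<longleftrightarrow> (\<forall>x\<in>V. 0 < \<phi> x) \<and> inj_on \<phi> V \<and> inj_on (elab \<phi>) E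
     \<and> Nlab V \<phi> \<inter> Elab E \<phi> = {}"

definition total_labeling :: "'a set \<Rightarrow> 'a set set \<Rightarrow> ('a \<Rightarrow> nat) \<Rightarrow> bool" where
  "total_labeling V E \<phi> \<longleftrightarrow> distinct_labeling V E \<phi> \<and>
     Nlab V \<phi> \<union> Elab E \<phi> = {1 .. card V + card E}"

definition supergraceful :: "'a set \<Rightarrow> 'a set set \<Rightarrow> bool" where
  "supergraceful V E \<longleftrightarrow> (\<exists>\<phi>. total_labeling V E \<phi>)"

definition q0 :: "'a set \<Rightarrow> 'a set set \<Rightarrow> nat" where
  "q0 V E = (LEAST k. 0 < k \<and> (\<exists>\<phi>. distinct_labeling V E \<phi> \<and>
       Nlab V \<phi> \<union> Elab E \<phi> \<subseteq> {1 .. card V + card E + k}))"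

definition opt :: "'a set \<Rightarrow> 'a set set \<Rightarrow> nat" where
  "opt V E = card V + card E + q0 V E"

definition semitotal_labeling :: "'a set \<Rightarrow> 'a set set \<Rightarrow> ('a \<Rightarrow> nat) \<Rightarrow> bool" where
  "semitotal_labeling V E \<phi> \<longleftrightarrow> distinct_labeling V E \<phi> \<and>
     Nlab V \<phi> \<union> Elab E \<phi> \<subseteq> {1 .. opt V E}"

end

theory Submission
  imports Defs
begin

text \<open>Let \<open>M = opt(G)\<close>. Every label lies in \<open>{1..M}\<close> and \<open>\<phi>(u) = M\<close>.
If \<open>M - 1\<close> is an edge label, the only way to obtain it is \<open>|1 - M|\<close>, so \<open>1\<close> is already a node
label of \<open>\<phi>\<close>. Otherwise \<open>M - 1 = \<phi>(v)\<close> for a node \<open>v\<close>, and we complement \<open>\<phi>\<close> at the universal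
node \<open>u\<close>: keep \<open>\<mu>(u) = M\<close> and put \<open>\<mu>(x) = M - \<phi>(x)\<close> elsewhere. This swaps the node label
\<open>\<phi>(x)\<close> with the label \<open>M - \<phi>(x)\<close> of the edge \<open>ux\<close> and leaves all other edge labels unchanged,
so the set of labels is preserved, and \<open>\<mu>(v) = 1\<close>.\<close>

lemma elab_doubleton: "elab f {a, b} = max (f a) (f b) - min (f a) (f b)"
  by (simp add: elab_def)

lemma simple_graph_edgeE:
  assumes "simple_graph V E" "e \<in> E"
  obtains x y where "x \<in> V" "y \<in> V" "x \<noteq> y" "e = {x, y}"
  using assms unfolding simple_graph_def by blast

lemma simple_graph_finite_edges:
  assumes "simple_graph V E"
  shows "finite E"
proof -
  have "E \<subseteq> Pow V" using assms by (auto simp: simple_graph_def)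
  then show ?thesis using assms by (simp add: simple_graph_def finite_subset)
qed

lemma distinct_labeling_iff_card:
  assumes "simple_graph V E"
  shows "distinct_labeling V E \<phi> \<longleftrightarrow>
    (\<forall>x\<in>V. 0 < \<phi> x) \<and> card (Nlab V \<phi> \<union> Elab E \<phi>) = card V + card E"
proof -
  have fin: "finite V" "finite E"
    using assms simple_graph_finite_edges by (auto simp: simple_graph_def)
  let ?N = "Nlab V \<phi>" and ?E = "Elab E \<phi>"
  have finNE: "finite ?N" "finite ?E" using fin by (simp_all add: Nlab_def Elab_def)
  have N_le: "card ?N \<le> card V" and E_le: "card ?E \<le> card E"
    by (simp_all add: Nlab_def Elab_def card_image_le fin)
  have Un_Int: "card ?N + card ?E = card (?N \<union> ?E) + card (?N \<inter> ?E)"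
    using finNE by (rule card_Un_Int)
  have "inj_on \<phi> V \<and> inj_on (elab \<phi>) E \<and> ?N \<inter> ?E = {} \<longleftrightarrow>
      card (?N \<union> ?E) = card V + card E"
  proof
    assume "inj_on \<phi> V \<and> inj_on (elab \<phi>) E \<and> ?N \<inter> ?E = {}"
    then show "card (?N \<union> ?E) = card V + card E"
      using Un_Int by (simp add: Nlab_def Elab_def card_image)
  next
    assume card_Un: "card (?N \<union> ?E) = card V + card E"
    then have "card ?N = card V" "card ?E = card E" "card (?N \<inter> ?E) = 0"
      using Un_Int N_le E_le by linarith+
    then show "inj_on \<phi> V \<and> inj_on (elab \<phi>) E \<and> ?N \<inter> ?E = {}"
      using fin finNE by (simp add: Nlab_def Elab_def eq_card_imp_inj_on)
  qed
  then show ?thesis by (auto simp: distinct_labeling_def)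
qed

lemma adjacent_if_degree_eq_card_minus_one:
  assumes "finite V" "u \<in> V" "degree V E u = card V - 1" "x \<in> V" "x \<noteq> u"
  shows "{u, x} \<in> E"
proof -
  let ?S = "{v \<in> V. {u, v} \<in> E \<and> u \<noteq> v}"
  have "?S \<subseteq> V - {u}" by auto
  moreover have "card ?S = card (V - {u})"
    using assms(1-3) by (simp add: degree_def)
  ultimately have "?S = V - {u}" using assms(1) by (simp add: card_subset_eq)
  then show ?thesis using assms(4,5) by blast
qed

lemma one_in_Nlab_if_elab_eq_top_minus_one:
  assumes "simple_graph V E" "Nlab V \<phi> \<union> Elab E \<phi> \<subseteq> {1..M}"
    and "e \<in> E" "elab \<phi> e = M - 1"
  shows "1 \<in> Nlab V \<phi>"
proof -
  obtain x y where xy: "x \<in> V" "y \<in> V" "e = {x, y}"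
    using assms(1,3) by (blast elim: simple_graph_edgeE)
  have "1 \<le> \<phi> x" "\<phi> x \<le> M" "1 \<le> \<phi> y" "\<phi> y \<le> M" "1 \<le> M - 1"
    using assms(2-4) xy by (auto simp: Nlab_def Elab_def)
  then have "\<phi> x = 1 \<or> \<phi> y = 1" using assms(4) xy(3) by (auto simp: elab_doubleton)
  then show ?thesis using xy unfolding Nlab_def by (metis image_eqI)
qed

definition complement_labeling :: "'a \<Rightarrow> ('a \<Rightarrow> nat) \<Rightarrow> 'a \<Rightarrow> nat" where
  "complement_labeling u \<phi> x = (if x = u then \<phi> u else \<phi> u - \<phi> x)"

lemma elab_complement_labeling_at:
  assumes "x \<noteq> u" "\<phi> x \<le> \<phi> u"
  shows "elab (complement_labeling u \<phi>) {u, x} = \<phi> x"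
  using assms by (auto simp: elab_doubleton complement_labeling_def)

lemma elab_complement_labeling_off:
  assumes "u \<notin> {x, y}" "\<phi> x \<le> \<phi> u" "\<phi> y \<le> \<phi> u"
  shows "elab (complement_labeling u \<phi>) {x, y} = elab \<phi> {x, y}"
  using assms by (auto simp: elab_doubleton complement_labeling_def max_def min_def)

lemma complement_labeling_eq_elab:
  assumes "x \<noteq> u" "\<phi> x \<le> \<phi> u"
  shows "complement_labeling u \<phi> x = elab \<phi> {u, x}"
  using assms by (simp add: elab_doubleton complement_labeling_def)

lemma labels_complement_labeling:
  assumes G: "simple_graph V E" and "u \<in> V"
    and universal: "\<And>x. x \<in> V \<Longrightarrow> x \<noteq> u \<Longrightarrow> {u, x} \<in> E"
    and top: "\<And>x. x \<in> V \<Longrightarrow> \<phi> x \<le> \<phi> u"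
  shows "Nlab V (complement_labeling u \<phi>) \<union> Elab E (complement_labeling u \<phi>) =
    Nlab V \<phi> \<union> Elab E \<phi>"
proof -
  let ?\<mu> = "complement_labeling u \<phi>" and ?W = "V - {u}"
  define star where "star = (\<lambda>x. {u, x}) ` ?W"
  define rest where "rest = {e \<in> E. u \<notin> e}"
  have V_split: "V = insert u ?W" using \<open>u \<in> V\<close> by blast
  have E_split: "E = star \<union> rest"
  proof
    show "E \<subseteq> star \<union> rest"
    proof
      fix e assume "e \<in> E"
      show "e \<in> star \<union> rest"
      proof (cases "u \<in> e")
        case True
        obtain x y where "x \<in> V" "y \<in> V" "x \<noteq> y" "e = {x, y}"
          using G \<open>e \<in> E\<close> by (blast elim: simple_graph_edgeE)
        with True have "e \<in> (\<lambda>x. {u, x}) ` ?W" by (auto simp: insert_commute)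
        then show ?thesis by (simp add: star_def)
      next
        case False
        then show ?thesis using \<open>e \<in> E\<close> by (simp add: rest_def)
      qed
    qed
    show "star \<union> rest \<subseteq> E" using universal by (auto simp: star_def rest_def)
  qed
  have "elab ?\<mu> e = elab \<phi> e" if "e \<in> rest" for e
  proof -
    have "e \<in> E" "u \<notin> e" using that by (simp_all add: rest_def)
    then obtain x y where "x \<in> V" "y \<in> V" "e = {x, y}"
      using G by (blast elim: simple_graph_edgeE)
    then show ?thesis using \<open>u \<notin> e\<close> by (simp add: elab_complement_labeling_off top)
  qed
  then have "elab ?\<mu> ` rest = elab \<phi> ` rest" by (rule image_cong[OF refl])
  moreover have "elab ?\<mu> ` star = \<phi> ` ?W"
    unfolding star_def image_image by (rule image_cong) (simp_all add: elab_complement_labeling_at top)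
  moreover have "?\<mu> ` ?W = elab \<phi> ` star"
    unfolding star_def image_image by (rule image_cong) (simp_all add: complement_labeling_eq_elab top)
  moreover have "?\<mu> u = \<phi> u" by (simp add: complement_labeling_def)
  ultimately show ?thesis
    unfolding Nlab_def Elab_def by (subst (1 2) V_split, subst (1 2) E_split) auto
qed

lemma distinct_labeling_complement_labeling:
  assumes "simple_graph V E" "u \<in> V" "\<And>x. x \<in> V \<Longrightarrow> x \<noteq> u \<Longrightarrow> {u, x} \<in> E"
    and top: "\<And>x. x \<in> V \<Longrightarrow> \<phi> x \<le> \<phi> u" and "distinct_labeling V E \<phi>"
  shows "distinct_labeling V E (complement_labeling u \<phi>)"
proof -
  have "\<phi> x < \<phi> u" if "x \<in> V" "x \<noteq> u" for x
    using that assms(2,5) top[OF that(1)] by (auto simp: distinct_labeling_def inj_on_def)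
  then have "\<forall>x\<in>V. 0 < complement_labeling u \<phi> x"
    using assms(2,5) by (auto simp: distinct_labeling_def complement_labeling_def)
  then show ?thesis
    using assms by (simp add: distinct_labeling_iff_card labels_complement_labeling)
qed

theorem theorem8p2:
  fixes V :: "'a set" and E :: "'a set set" and u :: 'a and \<phi> :: "'a \<Rightarrow> nat"
  assumes "connected_graph V E"
    and "\<not> supergraceful V E"
    and "u \<in> V" and "degree V E u = card V - 1"
    and "semitotal_labeling V E \<phi>"
    and "\<phi> u = opt V E"
    and "opt V E - 1 \<in> Nlab V \<phi> \<union> Elab E \<phi>"
  shows "\<exists>\<mu>. semitotal_labeling V E \<mu> \<and> 1 \<in> Nlab V \<mu>"
proof -
  have G: "simple_graph V E" using assms(1) by (simp add: connected_graph_def)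
  have labels: "Nlab V \<phi> \<union> Elab E \<phi> \<subseteq> {1..opt V E}" and dl: "distinct_labeling V E \<phi>"
    using assms(5) by (simp_all add: semitotal_labeling_def)
  show ?thesis
  proof (cases "opt V E - 1 \<in> Elab E \<phi>")
    case True
    then show ?thesis
      using assms(5) one_in_Nlab_if_elab_eq_top_minus_one[OF G labels] by (auto simp: Elab_def)
  next
    case False
    then obtain v where v: "v \<in> V" "\<phi> v = opt V E - 1"
      using assms(7) by (auto simp: Nlab_def)
    have top: "\<And>x. x \<in> V \<Longrightarrow> \<phi> x \<le> \<phi> u" using labels assms(6) by (auto simp: Nlab_def)
    have universal: "\<And>x. x \<in> V \<Longrightarrow> x \<noteq> u \<Longrightarrow> {u, x} \<in> E"
      using G assms(3,4) adjacent_if_degree_eq_card_minus_one by (auto simp: simple_graph_def)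
    let ?\<mu> = "complement_labeling u \<phi>"
    have "semitotal_labeling V E ?\<mu>"
      using assms(5)
        distinct_labeling_complement_labeling[where \<phi> = \<phi>, OF G assms(3) universal top dl]
        labels_complement_labeling[where \<phi> = \<phi>, OF G assms(3) universal top]
      by (simp add: semitotal_labeling_def)
    moreover have "0 < \<phi> u" using dl assms(3) by (simp add: distinct_labeling_def)
    then have "?\<mu> v = 1" using v assms(6) by (auto simp: complement_labeling_def)
    ultimately show ?thesis using v(1) unfolding Nlab_def by (metis image_eqI)
  qed
qed

end
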